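(* For every integer $M\ge 0$, every $n\ge1$ and every $\rho>0$, the randomized mechanism $(X_1,\dots,X_n)\in([0,1]^d)^n\mapsto \hat f_M$ (equivalently, the mechanism releasing $(\hat\theta_k)_{k\in\{-M,\dots,M\}^d}$) is $\rho$-zCDP when $\sigma_M=\frac{2\sqrt{(2M+1)^d}}{n\sqrt{\rho}}$.
   Context: For $k\in\mathbb{Z}^d$, $\phi_k(x)=e^{i2\pi\langle k,x\rangle}$ on $[0,1]^d$. Given data $X_1,\dots,X_n\in[0,1]^d$, $\tilde\theta_k=\frac1n\sum_{j=1}^n\overline{\phi_k(X_j)}$, $\hat\theta_k=\tilde\theta_k+\sigma_M\xi_k$ with $(\xi_k)$ i.i.d. $\mathcal N(0,1)+i\mathcal N(0,1)$ independent of the data, and $\hat f_M=\sum_{k\in\{-M,\dots,M\}^d}\hat\theta_k\phi_k$. Two datasets in $([0,1]^d)^n$ are neighbors if they differ in at most one entry (Hamming distance $\le1$). A randomized mechanism $\mathcal M$ is $\rho$-zero-concentrated differentially private ($\rho$-zCDP) if for all neighboring datasets $\mathbf X,\mathbf Y$ and all $\alpha\in(1,\infty)$, $D_\alpha(\mathcal M(\mathbf X)\|\mathcal M(\mathbf Y))\le\rho\alpha$, where $D_\alpha(P\|Q)=\frac1{\alpha-1}\log\int (dP/dQ)^{\alpha-1}dQ$ is the Rényi divergence. *)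

theory Defs
  imports "HOL-Probability.Probability"
begin

text \<open>Fourier basis on [0,1]^d; points are real^'d, frequencies int^'d, d = CARD('d).\<close>

definition ip :: "int^'d \<Rightarrow> real^'d \<Rightarrow> real" where
  "ip k x = (\<Sum>i\<in>UNIV. real_of_int (k $ i) * x $ i)"

definition phi :: "int^'d \<Rightarrow> real^'d \<Rightarrow> complex" where
  "phi k x = exp (\<i> * complex_of_real (2 * pi * ip k x))"

definition freq_set :: "nat \<Rightarrow> (int^'d) set" where
  "freq_set M = {k. \<forall>i. - int M \<le> k $ i \<and> k $ i \<le> int M}"

definition unit_cube :: "(real^'d) set" where
  "unit_cube = {x. \<forall>i. 0 \<le> x $ i \<and> x $ i \<le> 1}"

definition datasets :: "nat \<Rightarrow> (real^'d) list set" where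
  "datasets n = {Xs. length Xs = n \<and> set Xs \<subseteq> unit_cube}"

definition neighbors :: "'a list \<Rightarrow> 'a list \<Rightarrow> bool" where
  "neighbors Xs Ys \<longleftrightarrow> length Xs = length Ys \<and>
     card {j. j < length Xs \<and> Xs ! j \<noteq> Ys ! j} \<le> 1"

definition emp_coeff :: "(real^'d) list \<Rightarrow> int^'d \<Rightarrow> complex" where
  "emp_coeff Xs k = (\<Sum>j<length Xs. cnj (phi k (Xs ! j))) / of_nat (length Xs)"

text \<open>Law of \<mu> + \<sigma>(N(0,1) + i N(0,1)) (independent real and imaginary parts).\<close>
definition complex_normal :: "complex \<Rightarrow> real \<Rightarrow> complex measure" where
  "complex_normal \<mu> \<sigma> =
     distr (density lborel (normal_density (Re \<mu>) \<sigma>) \<Otimes>\<^sub>M density lborel (normal_density (Im \<mu>) \<sigma>))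
           borel (\<lambda>(a, b). Complex a b)"

definition fourier_mech :: "nat \<Rightarrow> real \<Rightarrow> (real^'d) list \<Rightarrow> (int^'d \<Rightarrow> complex) measure" where
  "fourier_mech M \<sigma> Xs = (\<Pi>\<^sub>M k\<in>freq_set M. complex_normal (emp_coeff Xs k) \<sigma>)"

definition renyi_div :: "real \<Rightarrow> 'a measure \<Rightarrow> 'a measure \<Rightarrow> ereal" where
  "renyi_div \<alpha> P Q =
     (let I = (\<integral>\<^sup>+ x. ennreal (enn2real (RN_deriv Q P x) powr (\<alpha> - 1)) \<partial>Q)
      in if absolutely_continuous Q P \<and> sets P = sets Q \<and> I < \<infinity>
         then ereal (ln (enn2real I) / (\<alpha> - 1)) else \<infinity>)"

definition zCDP :: "real \<Rightarrow> ('x list \<Rightarrow> 'b measure) \<Rightarrow> 'x list set \<Rightarrow> bool" where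
  "zCDP \<rho> mech D \<longleftrightarrow>
     (\<forall>Xs\<in>D. \<forall>Ys\<in>D. neighbors Xs Ys \<longrightarrow>
        (\<forall>\<alpha>>1. renyi_div \<alpha> (mech Xs) (mech Ys) \<le> ereal (\<rho> * \<alpha>)))"

end

theory Submission
  imports Defs
begin

text \<open>Moving the mean of a complex Gaussian from \<open>d\<close> to \<open>c\<close> multiplies its density by
  \<open>exp E\<close>, where \<open>E z = (\<bar>z - d\<bar>\<^sup>2 - \<bar>z - c\<bar>\<^sup>2) / (2\<sigma>\<^sup>2)\<close>; completing the square gives
  \<open>\<integral> exp (b E) dN(d, \<sigma>) = exp (b (b - 1) \<bar>c - d\<bar>\<^sup>2 / (2\<sigma>\<^sup>2))\<close>. The mechanism is a finite
  product of independent Gaussians, so the Renyi integral factorises and the divergence between the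
  outputs on \<open>X\<close> and \<open>Y\<close> is \<open>(\<alpha> - 2) \<Sum>\<^sub>k \<bar>\<theta>\<^sub>k(X) - \<theta>\<^sub>k(Y)\<bar>\<^sup>2 / (2\<sigma>\<^sup>2)\<close>
  (\<open>\<alpha> - 2\<close> rather than the familiar \<open>\<alpha>\<close>, because \<open>renyi_div\<close> integrates the
  \<open>(\<alpha> - 1)\<close>-th power of \<open>dP/dQ\<close> against \<open>Q\<close>, not against \<open>P\<close>).
  On neighbouring data sets every empirical coefficient moves by at most \<open>2/n\<close>, and there are at
  most \<open>(2M + 1)\<^sup>d\<close> coefficients, which the choice of \<open>\<sigma>\<close> turns into the bound \<open>\<rho>\<alpha>\<close>.\<close>

definition lborel_complex :: "complex measure" where
  "lborel_complex = distr (lborel \<Otimes>\<^sub>M lborel) borel (\<lambda>(a, b). Complex a b)"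

definition complex_normal_density :: "complex \<Rightarrow> real \<Rightarrow> complex \<Rightarrow> real" where
  "complex_normal_density c s z = normal_density (Re c) s (Re z) * normal_density (Im c) s (Im z)"

definition normal_log_ratio :: "complex \<Rightarrow> complex \<Rightarrow> real \<Rightarrow> complex \<Rightarrow> real" where
  "normal_log_ratio c d s z = ((cmod (z - d))\<^sup>2 - (cmod (z - c))\<^sup>2) / (2 * s\<^sup>2)"

lemma measurable_Complex_pair [measurable]:
  "(\<lambda>(a, b). Complex a b) \<in> borel_measurable (lborel \<Otimes>\<^sub>M lborel)"
  by (simp add: borel_measurable_complex_iff case_prod_unfold)

lemma sets_lborel_complex [simp, measurable_cong]: "sets lborel_complex = sets borel"
  unfolding lborel_complex_def by simp

lemma borel_measurable_complex_normal_density [measurable]: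
  "complex_normal_density c s \<in> borel_measurable borel"
  unfolding complex_normal_density_def normal_density_def by measurable

lemma borel_measurable_normal_log_ratio [measurable]:
  "normal_log_ratio c d s \<in> borel_measurable borel"
  unfolding normal_log_ratio_def by measurable

lemma complex_normal_density_nonneg: "0 < s \<Longrightarrow> 0 \<le> complex_normal_density c s z"
  unfolding complex_normal_density_def by (simp add: normal_density_nonneg)

lemma sets_complex_normal [simp, measurable_cong]: "sets (complex_normal c s) = sets borel"
  unfolding complex_normal_def by simp

lemma prob_space_complex_normal: "0 < s \<Longrightarrow> prob_space (complex_normal c s)"
  unfolding complex_normal_def
  by (intro prob_space.prob_space_distr prob_space_pair prob_space_normal_density) auto

lemma complex_normal_eq_density:
  assumes "0 < s"
  shows "complex_normal c s = density lborel_complex (\<lambda>z. ennreal (complex_normal_density c s z))"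
proof -
  have "complex_normal c s = distr (density (lborel \<Otimes>\<^sub>M lborel)
      (\<lambda>(x, y). ennreal (normal_density (Re c) s x) * ennreal (normal_density (Im c) s y)))
      borel (\<lambda>(a, b). Complex a b)"
    unfolding complex_normal_def using assms
    by (subst pair_measure_density)
      (auto intro!: prob_space_imp_sigma_finite prob_space_normal_density
        lborel.sigma_finite_measure_axioms)
  also have "\<dots> = distr (density (lborel \<Otimes>\<^sub>M lborel)
      (\<lambda>p. ennreal (complex_normal_density c s ((\<lambda>(a, b). Complex a b) p))))
      borel (\<lambda>(a, b). Complex a b)"
    by (intro arg_cong2[where f="\<lambda>M X. distr M borel X"] density_cong refl)
      (auto simp: complex_normal_density_def normal_density_nonneg ennreal_mult'')
  also have "\<dots> = density lborel_complex (\<lambda>z. ennreal (complex_normal_density c s z))"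
    unfolding lborel_complex_def by (subst density_distr) auto
  finally show ?thesis .
qed

lemma complex_normal_density_mult_exp_log_ratio:
  assumes "0 < s"
  shows "complex_normal_density d s z * exp (b * normal_log_ratio c d s z) =
    exp (b * (b - 1) * (cmod (c - d))\<^sup>2 / (2 * s\<^sup>2)) *
    complex_normal_density (of_real b * c + of_real (1 - b) * d) s z"
proof -
  have "- ((Re z - Re d)\<^sup>2 / (2 * s\<^sup>2)) + - ((Im z - Im d)\<^sup>2 / (2 * s\<^sup>2)) + b * normal_log_ratio c d s z =
      b * (b - 1) * (cmod (c - d))\<^sup>2 / (2 * s\<^sup>2) +
      (- ((Re z - (b * Re c + (1 - b) * Re d))\<^sup>2 / (2 * s\<^sup>2)) +
       - ((Im z - (b * Im c + (1 - b) * Im d))\<^sup>2 / (2 * s\<^sup>2)))"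
    using assms unfolding normal_log_ratio_def cmod_power2
    by (simp add: field_simps power2_eq_square)
  then show ?thesis
    unfolding complex_normal_density_def normal_density_def
    by (simp add: exp_add[symmetric] mult_ac)
qed

lemma complex_normal_eq_density_log_ratio:
  assumes "0 < s"
  shows "complex_normal c s = density (complex_normal d s) (\<lambda>z. ennreal (exp (normal_log_ratio c d s z)))"
proof -
  have "density (complex_normal d s) (\<lambda>z. ennreal (exp (normal_log_ratio c d s z))) =
      density lborel_complex (\<lambda>z. ennreal (complex_normal_density d s z) * ennreal (exp (normal_log_ratio c d s z)))"
    unfolding complex_normal_eq_density[OF assms]
    by (subst density_density_eq) auto
  also have "\<dots> = density lborel_complex (\<lambda>z. ennreal (complex_normal_density c s z))"
    using complex_normal_density_mult_exp_log_ratio[OF assms, where b=1] complex_normal_density_nonneg[OF assms]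
    by (intro density_cong refl) (auto simp: ennreal_mult''[symmetric])
  finally show ?thesis
    using complex_normal_eq_density[OF assms] by simp
qed

lemma nn_integral_exp_normal_log_ratio:
  assumes "0 < s"
  shows "(\<integral>\<^sup>+ z. ennreal (exp (b * normal_log_ratio c d s z)) \<partial>complex_normal d s) =
    ennreal (exp (b * (b - 1) * (cmod (c - d))\<^sup>2 / (2 * s\<^sup>2)))"
proof -
  let ?m = "of_real b * c + of_real (1 - b) * d"
  let ?K = "exp (b * (b - 1) * (cmod (c - d))\<^sup>2 / (2 * s\<^sup>2))"
  have "(\<integral>\<^sup>+ z. ennreal (exp (b * normal_log_ratio c d s z)) \<partial>complex_normal d s) =
      (\<integral>\<^sup>+ z. ennreal (complex_normal_density d s z) * ennreal (exp (b * normal_log_ratio c d s z)) \<partial>lborel_complex)"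
    unfolding complex_normal_eq_density[OF assms]
    by (subst nn_integral_density) auto
  also have "\<dots> = (\<integral>\<^sup>+ z. ennreal ?K * ennreal (complex_normal_density ?m s z) \<partial>lborel_complex)"
    using complex_normal_density_mult_exp_log_ratio[OF assms, where b=b] complex_normal_density_nonneg[OF assms]
    by (intro nn_integral_cong) (auto simp: ennreal_mult''[symmetric])
  also have "\<dots> = ennreal ?K * (\<integral>\<^sup>+ z. ennreal (complex_normal_density ?m s z) * 1 \<partial>lborel_complex)"
    by (subst nn_integral_cmult) auto
  also have "(\<integral>\<^sup>+ z. ennreal (complex_normal_density ?m s z) * 1 \<partial>lborel_complex) =
      (\<integral>\<^sup>+ z. 1 \<partial>complex_normal ?m s)"
    unfolding complex_normal_eq_density[OF assms]
    by (subst nn_integral_density) auto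
  also have "\<dots> = 1"
    using prob_space.emeasure_space_1[OF prob_space_complex_normal[OF assms]] by simp
  finally show ?thesis by simp
qed

lemma indicator_PiE_eq_prod:
  assumes "finite I" "x \<in> extensional I"
  shows "indicator (Pi\<^sub>E I A) x = (\<Prod>i\<in>I. indicator (A i) (x i) :: ennreal)"
  using assms by (auto simp: indicator_def PiE_iff)

lemma PiM_density:
  assumes I: "finite I" and M: "\<And>i. sigma_finite_measure (M i)"
    and density: "\<And>i. sigma_finite_measure (density (M i) (f i))"
    and f[measurable]: "\<And>i. f i \<in> borel_measurable (M i)"
  shows "(\<Pi>\<^sub>M i\<in>I. density (M i) (f i)) = density (\<Pi>\<^sub>M i\<in>I. M i) (\<lambda>x. \<Prod>i\<in>I. f i (x i))"
proof -
  interpret M: product_sigma_finite M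
    unfolding product_sigma_finite_def using M by blast
  interpret D: product_sigma_finite "\<lambda>i. density (M i) (f i)"
    unfolding product_sigma_finite_def using density by blast
  show ?thesis
  proof (rule D.PiM_eqI[OF I, symmetric])
    show "sets (density (Pi\<^sub>M I M) (\<lambda>x. \<Prod>i\<in>I. f i (x i))) = sets (Pi\<^sub>M I (\<lambda>i. density (M i) (f i)))"
      by (simp cong: sets_PiM_cong)
  next
    fix A assume "\<And>i. i \<in> I \<Longrightarrow> A i \<in> sets (density (M i) (f i))"
    then have A[measurable]: "\<And>i. i \<in> I \<Longrightarrow> A i \<in> sets (M i)" by simp
    have "Pi\<^sub>E I A \<in> sets (PiM I M)"
      using A by (intro sets_PiM_I_finite I) auto
    then have "emeasure (density (Pi\<^sub>M I M) (\<lambda>x. \<Prod>i\<in>I. f i (x i))) (Pi\<^sub>E I A) =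
        (\<integral>\<^sup>+ x. (\<Prod>i\<in>I. f i (x i)) * indicator (Pi\<^sub>E I A) x \<partial>PiM I M)"
      by (simp add: emeasure_density)
    also have "\<dots> = (\<integral>\<^sup>+ x. (\<Prod>i\<in>I. f i (x i) * indicator (A i) (x i)) \<partial>PiM I M)"
      by (intro nn_integral_cong)
        (simp add: indicator_PiE_eq_prod[OF I] space_PiM prod.distrib PiE_iff)
    also have "\<dots> = (\<Prod>i\<in>I. \<integral>\<^sup>+ y. f i y * indicator (A i) y \<partial>M i)"
      using A by (intro M.product_nn_integral_prod I) auto
    also have "\<dots> = (\<Prod>i\<in>I. emeasure (density (M i) (f i)) (A i))"
      using A by (intro prod.cong refl) (simp add: emeasure_density)
    finally show "emeasure (density (Pi\<^sub>M I M) (\<lambda>x. \<Prod>i\<in>I. f i (x i))) (Pi\<^sub>E I A) =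
        (\<Prod>i\<in>I. emeasure (density (M i) (f i)) (A i))" .
  qed
qed

lemma PiM_complex_normal_eq_density:
  assumes "finite I" "0 < s"
  shows "(\<Pi>\<^sub>M k\<in>I. complex_normal (c k) s) = density (\<Pi>\<^sub>M k\<in>I. complex_normal (d k) s)
    (\<lambda>x. \<Prod>k\<in>I. ennreal (exp (normal_log_ratio (c k) (d k) s (x k))))"
proof -
  have "(\<Pi>\<^sub>M k\<in>I. complex_normal (c k) s) =
      (\<Pi>\<^sub>M k\<in>I. density (complex_normal (d k) s) (\<lambda>z. ennreal (exp (normal_log_ratio (c k) (d k) s z))))"
    using complex_normal_eq_density_log_ratio[OF assms(2)] by (intro PiM_cong refl) auto
  also have "\<dots> = density (\<Pi>\<^sub>M k\<in>I. complex_normal (d k) s)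
      (\<lambda>x. \<Prod>k\<in>I. ennreal (exp (normal_log_ratio (c k) (d k) s (x k))))"
    using assms
    by (intro PiM_density)
      (auto simp: complex_normal_eq_density_log_ratio[symmetric]
        intro: prob_space_imp_sigma_finite prob_space_complex_normal)
  finally show ?thesis .
qed

lemma renyi_div_density:
  assumes Q: "sigma_finite_measure Q" and G[measurable]: "G \<in> borel_measurable Q"
    and integral: "(\<integral>\<^sup>+ x. ennreal (enn2real (G x) powr (\<alpha> - 1)) \<partial>Q) = ennreal r" and "0 \<le> r"
  shows "renyi_div \<alpha> (density Q G) Q = ereal (ln r / (\<alpha> - 1))"
proof -
  have "AE x in Q. G x = RN_deriv Q (density Q G) x"
    by (rule sigma_finite_measure.RN_deriv_unique[OF Q G refl])
  then have "(\<integral>\<^sup>+ x. ennreal (enn2real (RN_deriv Q (density Q G) x) powr (\<alpha> - 1)) \<partial>Q) = ennreal r"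
    unfolding integral[symmetric] by (intro nn_integral_cong_AE) auto
  moreover have "absolutely_continuous Q (density Q G)"
    by (rule absolutely_continuousI_density[OF G])
  ultimately show ?thesis
    unfolding renyi_div_def Let_def using \<open>0 \<le> r\<close> by simp
qed

lemma renyi_div_PiM_complex_normal:
  assumes I: "finite I" and s: "0 < s" and "\<alpha> \<noteq> 1"
  shows "renyi_div \<alpha> (\<Pi>\<^sub>M k\<in>I. complex_normal (c k) s) (\<Pi>\<^sub>M k\<in>I. complex_normal (d k) s) =
    ereal ((\<alpha> - 2) * (\<Sum>k\<in>I. (cmod (c k - d k))\<^sup>2) / (2 * s\<^sup>2))"
proof -
  define Q where "Q = (\<Pi>\<^sub>M k\<in>I. complex_normal (d k) s)"
  define E where "E k = normal_log_ratio (c k) (d k) s" for k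
  define D where "D = (\<alpha> - 2) * (\<Sum>k\<in>I. (cmod (c k - d k))\<^sup>2) / (2 * s\<^sup>2)"
  interpret product_sigma_finite "\<lambda>k. complex_normal (d k) s"
    unfolding product_sigma_finite_def
    by (auto intro: prob_space_imp_sigma_finite prob_space_complex_normal s)
  have "prob_space Q"
    unfolding Q_def by (intro prob_space_PiM prob_space_complex_normal s)
  have "(\<Prod>k\<in>I. exp (E k (x k))) powr (\<alpha> - 1) = (\<Prod>k\<in>I. exp ((\<alpha> - 1) * E k (x k)))" for x
  proof -
    have "(\<Prod>k\<in>I. exp (E k (x k))) powr (\<alpha> - 1) = exp ((\<Sum>k\<in>I. E k (x k)) * (\<alpha> - 1))"
      unfolding exp_sum[OF I, symmetric] exp_powr_real ..
    then show ?thesis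
      by (simp add: exp_sum[OF I, symmetric] sum_distrib_left mult.commute)
  qed
  then have "(\<integral>\<^sup>+ x. ennreal (enn2real (\<Prod>k\<in>I. ennreal (exp (E k (x k)))) powr (\<alpha> - 1)) \<partial>Q) =
      (\<integral>\<^sup>+ x. (\<Prod>k\<in>I. ennreal (exp ((\<alpha> - 1) * E k (x k)))) \<partial>Q)"
    by (simp add: prod_ennreal prod_nonneg)
  also have "\<dots> = (\<Prod>k\<in>I. \<integral>\<^sup>+ z. ennreal (exp ((\<alpha> - 1) * E k z)) \<partial>complex_normal (d k) s)"
    unfolding Q_def E_def by (intro product_nn_integral_prod I) auto
  also have "\<dots> = (\<Prod>k\<in>I. ennreal (exp ((\<alpha> - 1) * (\<alpha> - 1 - 1) * (cmod (c k - d k))\<^sup>2 / (2 * s\<^sup>2))))"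
    unfolding E_def by (intro prod.cong refl nn_integral_exp_normal_log_ratio s)
  also have "\<dots> = ennreal (exp ((\<alpha> - 1) * D))"
    unfolding D_def using I
    by (simp add: prod_ennreal exp_sum sum_distrib_left sum_divide_distrib mult_ac)
  finally have "renyi_div \<alpha> (density Q (\<lambda>x. \<Prod>k\<in>I. ennreal (exp (E k (x k))))) Q =
      ereal (ln (exp ((\<alpha> - 1) * D)) / (\<alpha> - 1))"
    using \<open>prob_space Q\<close> unfolding Q_def E_def
    by (intro renyi_div_density prob_space_imp_sigma_finite) auto
  then show ?thesis
    using assms unfolding Q_def E_def D_def[symmetric] PiM_complex_normal_eq_density[OF I s, of c d]
    by simp
qed

lemma finite_freq_set: "finite (freq_set M :: (int^'d) set)"
  and card_freq_set_le: "card (freq_set M :: (int^'d) set) \<le> (2 * M + 1) ^ CARD('d)"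
proof -
  let ?B = "PiE (UNIV :: 'd set) (\<lambda>_. {- int M..int M})"
  have freq_set: "(freq_set M :: (int^'d) set) \<subseteq> vec_lambda ` ?B"
  proof
    fix k :: "int^'d" assume "k \<in> freq_set M"
    then show "k \<in> vec_lambda ` ?B"
      by (intro image_eqI[of _ _ "\<lambda>i. k $ i"]) (auto simp: freq_set_def)
  qed
  have "finite ?B" by (intro finite_PiE) auto
  then show "finite (freq_set M :: (int^'d) set)"
    using freq_set by (rule finite_surj)
  have "card (freq_set M :: (int^'d) set) \<le> card (vec_lambda ` ?B)"
    using freq_set \<open>finite ?B\<close> by (intro card_mono) auto
  also have "\<dots> \<le> card ?B"
    using \<open>finite ?B\<close> by (rule card_image_le)
  also have "card ?B = (2 * M + 1) ^ CARD('d)"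
    using nat_int_add[of "2 * M" 1] by (simp add: card_PiE)
  finally show "card (freq_set M :: (int^'d) set) \<le> (2 * M + 1) ^ CARD('d)" .
qed

lemma norm_phi [simp]: "cmod (phi k x) = 1"
  unfolding phi_def by (rule norm_exp_i_times)

lemma norm_emp_coeff_diff_le:
  assumes "neighbors Xs Ys"
  shows "cmod (emp_coeff Xs k - emp_coeff Ys k) \<le> 2 / real (length Xs)"
proof -
  define n where "n = length Xs"
  define f where "f j = cnj (phi k (Xs ! j)) - cnj (phi k (Ys ! j))" for j
  define J where "J = {j. j < n \<and> Xs ! j \<noteq> Ys ! j}"
  have "length Ys = n" and "card J \<le> 1"
    using assms unfolding neighbors_def J_def n_def by auto
  then have "emp_coeff Xs k - emp_coeff Ys k = (\<Sum>j<n. f j) / of_nat n"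
    unfolding emp_coeff_def f_def n_def by (simp add: sum_subtractf diff_divide_distrib)
  also have "(\<Sum>j<n. f j) = (\<Sum>j\<in>J. f j)"
    by (intro sum.mono_neutral_right) (auto simp: J_def f_def)
  finally have diff: "cmod (emp_coeff Xs k - emp_coeff Ys k) = cmod (\<Sum>j\<in>J. f j) / real n"
    by (simp add: norm_divide)
  have "cmod (\<Sum>j\<in>J. f j) \<le> (\<Sum>j\<in>J. cmod (f j))"
    by (rule norm_sum)
  also have "\<dots> \<le> (\<Sum>j\<in>J. 2)"
    unfolding f_def
    by (intro sum_mono order.trans[OF norm_triangle_ineq4]) simp
  also have "\<dots> \<le> 2"
    using \<open>card J \<le> 1\<close> by simp
  finally show ?thesis
    unfolding diff n_def[symmetric] by (rule divide_right_mono) simp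
qed

lemma renyi_div_fourier_mech_le:
  fixes Xs Ys :: "(real^'d) list"
  assumes "neighbors Xs Ys" "0 < \<sigma>" "1 < \<alpha>"
  shows "renyi_div \<alpha> (fourier_mech M \<sigma> Xs) (fourier_mech M \<sigma> Ys) \<le>
    ereal (\<alpha> * (2 * card (freq_set M :: (int^'d) set)) / (real (length Xs) * \<sigma>)\<^sup>2)"
proof -
  define F where "F = (freq_set M :: (int^'d) set)"
  define n where "n = real (length Xs)"
  define S where "S = (\<Sum>k\<in>F. (cmod (emp_coeff Xs k - emp_coeff Ys k))\<^sup>2)"
  have "S \<le> (\<Sum>k\<in>F. (2 / n)\<^sup>2)"
    unfolding S_def n_def
    by (intro sum_mono power_mono norm_emp_coeff_diff_le assms(1) norm_ge_zero)
  then have "S \<le> card F * 4 / n\<^sup>2"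
    by (simp add: power_divide)
  moreover have "0 \<le> S"
    unfolding S_def by (intro sum_nonneg) simp
  ultimately have "(\<alpha> - 2) * S / (2 * \<sigma>\<^sup>2) \<le> \<alpha> * (card F * 4 / n\<^sup>2) / (2 * \<sigma>\<^sup>2)"
    using assms(3) by (intro divide_right_mono mult_mono) auto
  also have "\<dots> = \<alpha> * (2 * card F) / (n * \<sigma>)\<^sup>2"
    by (simp add: field_simps power_mult_distrib)
  finally show ?thesis
    using renyi_div_PiM_complex_normal[OF finite_freq_set assms(2), where c="emp_coeff Xs" and d="emp_coeff Ys"] assms(3)
    unfolding fourier_mech_def F_def n_def S_def by simp
qed

lemma zCDP_fourier_mech:
  assumes "0 < \<rho>" "0 < \<sigma>" and "2 * card (freq_set M :: (int^'d) set) \<le> \<rho> * (real n * \<sigma>)\<^sup>2"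
  shows "zCDP \<rho> (fourier_mech M \<sigma> :: (real^'d) list \<Rightarrow> _) (datasets n)"
  unfolding zCDP_def
proof (intro ballI impI allI)
  fix Xs Ys :: "(real^'d) list" and \<alpha> :: real
  assume "Xs \<in> datasets n" "neighbors Xs Ys" "1 < \<alpha>"
  then have "renyi_div \<alpha> (fourier_mech M \<sigma> Xs) (fourier_mech M \<sigma> Ys) \<le>
      ereal (\<alpha> * (2 * card (freq_set M :: (int^'d) set)) / (real n * \<sigma>)\<^sup>2)"
    using renyi_div_fourier_mech_le[of Xs Ys \<sigma> \<alpha> M] \<open>0 < \<sigma>\<close>
    unfolding datasets_def by simp
  also have "\<dots> \<le> ereal (\<alpha> * (\<rho> * (real n * \<sigma>)\<^sup>2) / (real n * \<sigma>)\<^sup>2)"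
    unfolding ereal_less_eq(3) using assms(3) \<open>1 < \<alpha>\<close>
    by (intro divide_right_mono mult_left_mono) auto
  also have "\<dots> \<le> ereal (\<rho> * \<alpha>)"
    using \<open>0 < \<rho>\<close> \<open>1 < \<alpha>\<close> by (cases "real n * \<sigma> = 0") auto
  finally show "renyi_div \<alpha> (fourier_mech M \<sigma> Xs) (fourier_mech M \<sigma> Ys) \<le> ereal (\<rho> * \<alpha>)" .
qed

theorem theorem3p2:
  fixes M n :: nat and \<rho> :: real
  assumes "n \<ge> 1" and "\<rho> > 0"
  shows "zCDP \<rho>
     (fourier_mech M (2 * sqrt ((2 * real M + 1) ^ CARD('d)) / (real n * sqrt \<rho>))
        :: (real^'d) list \<Rightarrow> (int^'d \<Rightarrow> complex) measure)
     (datasets n)"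
proof (rule zCDP_fourier_mech)
  define K where "K = (2 * real M + 1) ^ CARD('d)"
  have "real (card (freq_set M :: (int^'d) set)) \<le> real ((2 * M + 1) ^ CARD('d))"
    unfolding of_nat_le_iff by (rule card_freq_set_le)
  moreover have "\<rho> * (real n * (2 * sqrt K / (real n * sqrt \<rho>)))\<^sup>2 = 4 * K"
    using assms unfolding K_def by (simp add: power_mult_distrib power_divide)
  ultimately show "2 * card (freq_set M :: (int^'d) set) \<le>
      \<rho> * (real n * (2 * sqrt ((2 * real M + 1) ^ CARD('d)) / (real n * sqrt \<rho>)))\<^sup>2"
    unfolding K_def by (simp add: add.commute)
qed (use assms in auto)

end
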